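(* (a) For every $e\in E$ there exist $i,c,d\in\mathbb{Z}$ with $c,d\geq0$ such that $e=c\epsilon^i+d\epsilon^{i+1}$. (b) Every $e\in E$ is represented over $\mathcal{O}_K$ by the 8-ary form $x_1^2+x_2^2+x_3^2+x_4^2+\epsilon(x_5^2+x_6^2+x_7^2+x_8^2)$, i.e., $e$ equals this form evaluated at some $x_1,\dots,x_8\in\mathcal{O}_K$.
   Context: $D>1$ squarefree, $K=\mathbb{Q}(\sqrt D)$, $\mathcal{O}_K$ its ring of integers. $\epsilon$ is the totally positive fundamental unit of $\mathcal{O}_K$ (the smallest unit $>1$ whose conjugate is also positive; it has norm $1$). $E=\mathbb{N}_0[\epsilon,\epsilon^{-1}]$ is the set of all finite sums $\sum_{i=i_0}^{i_1}e_i\epsilon^i$ with $i_0,i_1\in\mathbb{Z}$ and integers $e_i\geq0$. *)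

theory Defs
  imports "HOL-Analysis.Analysis" "HOL-Computational_Algebra.Computational_Algebra"
begin

definition quad_field :: "int \<Rightarrow> real set" where
  "quad_field D = {of_rat p + of_rat q * sqrt (real_of_int D) | p q. True}"

definition ring_of_integers :: "int \<Rightarrow> real set" where
  "ring_of_integers D = {x \<in> quad_field D. algebraic_int x}"

definition qconj :: "int \<Rightarrow> real \<Rightarrow> real" where
  "qconj D x = (THE y. \<exists>p q. x = of_rat p + of_rat q * sqrt (real_of_int D)
                              \<and> y = of_rat p - of_rat q * sqrt (real_of_int D))"

definition units_OK :: "int \<Rightarrow> real set" where
  "units_OK D = {u \<in> ring_of_integers D. u \<noteq> 0 \<and> inverse u \<in> ring_of_integers D}"

definition tp_fund_unit :: "int \<Rightarrow> real \<Rightarrow> bool" where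
  "tp_fund_unit D \<epsilon> \<longleftrightarrow> \<epsilon> \<in> units_OK D \<and> \<epsilon> > 1 \<and> qconj D \<epsilon> > 0 \<and>
     (\<forall>u \<in> units_OK D. u > 1 \<and> qconj D u > 0 \<longrightarrow> \<epsilon> \<le> u)"

text \<open>E = N_0[eps, eps^-1]: finite sums of e_i eps^i with e_i \<ge> 0 integers.\<close>
definition semiring_E :: "real \<Rightarrow> real set" where
  "semiring_E \<epsilon> = {(\<Sum>k<n. real (c k) * \<epsilon> powi (i0 + int k)) | i0 n c. True}"

end

theory Submission
  imports Defs
begin

text \<open>
  Since \<open>\<epsilon>\<close> is a unit of norm 1 and norm and trace of an algebraic integer of \<open>K\<close> are
  rational integers, \<open>\<epsilon>\<close> is a root of \<open>X\<^sup>2 - t X + 1\<close> with \<open>t \<in> \<int>\<close>. Hence every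
  \<open>e \<in> E\<close> and every \<open>\<epsilon>\<^sup>-\<^sup>i e\<close> is of the form \<open>a + b \<epsilon>\<close> with \<open>a, b \<in> \<int>\<close>, and the same
  coefficients give the conjugate, in which \<open>\<epsilon>\<close> is replaced by \<open>\<epsilon>' = \<epsilon>\<^sup>-\<^sup>1\<close>. Both \<open>e\<close> and
  \<open>e'\<close> are positive, so \<open>e / e'\<close> lies in some interval \<open>[\<epsilon>\<^sup>2\<^sup>i, \<epsilon>\<^sup>2\<^sup>i\<^sup>+\<^sup>2]\<close>; for
  \<open>\<epsilon>\<^sup>-\<^sup>i e = a + b \<epsilon>\<close> this forces \<open>a, b \<ge> 0\<close>, which is (a). For (b), split the exponent by
  parity to write \<open>c \<epsilon>\<^sup>i + d \<epsilon>\<^sup>i\<^sup>+\<^sup>1\<close> as \<open>c' y\<^sup>2 + \<epsilon> d' w\<^sup>2\<close> with powers \<open>y, w\<close> of \<open>\<epsilon>\<close>, and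
  write \<open>c'\<close> and \<open>d'\<close> as sums of four squares (Lagrange).
\<close>

section \<open>Lagrange's four-square theorem\<close>

definition sum_four_squares :: "int \<Rightarrow> bool" where
  "sum_four_squares n \<longleftrightarrow> (\<exists>a b c d. n = a\<^sup>2 + b\<^sup>2 + c\<^sup>2 + d\<^sup>2)"

lemma euler_four_square_identity:
  fixes a1 a2 a3 a4 b1 b2 b3 b4 :: "'a :: comm_ring_1"
  shows "(a1\<^sup>2 + a2\<^sup>2 + a3\<^sup>2 + a4\<^sup>2) * (b1\<^sup>2 + b2\<^sup>2 + b3\<^sup>2 + b4\<^sup>2) =
      (a1 * b1 + a2 * b2 + a3 * b3 + a4 * b4)\<^sup>2 + (a1 * b2 - a2 * b1 + a3 * b4 - a4 * b3)\<^sup>2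
    + (a1 * b3 - a3 * b1 + a4 * b2 - a2 * b4)\<^sup>2 + (a1 * b4 - a4 * b1 + a2 * b3 - a3 * b2)\<^sup>2"
  by (simp add: power2_eq_square algebra_simps)

lemma sum_four_squares_mult:
  "sum_four_squares m \<Longrightarrow> sum_four_squares n \<Longrightarrow> sum_four_squares (m * n)"
  unfolding sum_four_squares_def by (metis euler_four_square_identity)

lemma prime_squares_mod_inj:
  fixes p x y :: int
  assumes "prime p" "0 \<le> x" "0 \<le> y" "2 * x < p" "2 * y < p" "x\<^sup>2 mod p = y\<^sup>2 mod p"
  shows "x = y"
proof -
  have "p dvd (x - y) * (x + y)"
    using assms(6) by (simp add: mod_eq_dvd_iff power2_eq_square algebra_simps)
  hence "p dvd x - y \<or> p dvd x + y" using assms(1) by (simp add: prime_dvd_mult_iff)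
  moreover have "\<bar>x - y\<bar> < p" "x + y < p" using assms(2-5) by linarith+
  ultimately show ?thesis
    using assms(2,3) dvd_imp_le_int[of "x - y" p] zdvd_imp_le[of p "x + y"] by fastforce
qed

lemma odd_prime_dvd_sum_two_squares_plus_one:
  fixes p :: int
  assumes "prime p" "odd p"
  obtains x y where "0 \<le> x" "0 \<le> y" "2 * x < p" "2 * y < p" "p dvd x\<^sup>2 + y\<^sup>2 + 1"
proof -
  define h where "h = (p - 1) div 2"
  have p: "2 * h + 1 = p" "p > 1"
    using assms prime_gt_1_int unfolding h_def by (auto elim!: oddE)
  define A where "A = (\<lambda>x. x\<^sup>2 mod p) ` {0..h}"
  define B where "B = (\<lambda>y. (-1 - y\<^sup>2) mod p) ` {0..h}"
  have "inj_on (\<lambda>x. x\<^sup>2 mod p) {0..h}" "inj_on (\<lambda>y. (-1 - y\<^sup>2) mod p) {0..h}"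
    using prime_squares_mod_inj[OF assms(1)] p
    by (auto intro!: inj_onI simp: mod_eq_dvd_iff dvd_diff_commute)
  hence "card A + card B = nat p + 1"
    using p unfolding A_def B_def by (simp add: card_image)
  moreover have "A \<union> B \<subseteq> {0..<p}"
    unfolding A_def B_def using p(2) by (auto intro: pos_mod_bound pos_mod_sign)
  hence "card (A \<union> B) \<le> nat p"
    using card_mono[of "{0..<p}" "A \<union> B"] by simp
  ultimately have "A \<inter> B \<noteq> {}"
    using card_Un_disjoint[of A B] unfolding A_def B_def by fastforce
  then obtain x y where xy: "x \<in> {0..h}" "y \<in> {0..h}" "x\<^sup>2 mod p = (-1 - y\<^sup>2) mod p"
    unfolding A_def B_def by (auto simp del: atLeastAtMost_iff)
  hence "p dvd x\<^sup>2 + y\<^sup>2 + 1" by (simp add: mod_eq_dvd_iff algebra_simps)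
  with xy p show thesis by (intro that[of x y]) auto
qed

lemma centered_residue:
  fixes x m :: int
  assumes "m > 0"
  obtains y k where "x = y + m * k" "2 * \<bar>y\<bar> \<le> m"
proof (cases "2 * (x mod m) \<le> m")
  case True
  thus thesis using assms by (intro that[of "x mod m" "x div m"]) auto
next
  case False
  moreover have "x mod m < m" using assms by simp
  ultimately show thesis
    by (intro that[of "x mod m - m" "x div m + 1"]) (auto simp: algebra_simps abs_if)
qed

text \<open>Each component of Euler's product of \<open>x\<close> and \<open>x - m k\<close> is divisible by \<open>m\<close>,
  since \<open>x \<equiv> x - m k\<close> modulo \<open>m\<close>; dividing by \<open>m\<^sup>2\<close> leaves \<open>r p\<close>.\<close>

lemma four_squares_descent_identity:
  fixes m p r x1 x2 x3 x4 k1 k2 k3 k4 :: int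
  assumes "m \<noteq> 0" and mp: "m * p = x1\<^sup>2 + x2\<^sup>2 + x3\<^sup>2 + x4\<^sup>2"
    and mr: "m * r = (x1 - m * k1)\<^sup>2 + (x2 - m * k2)\<^sup>2 + (x3 - m * k3)\<^sup>2 + (x4 - m * k4)\<^sup>2"
  shows "sum_four_squares (r * p)"
proof -
  define w1 where "w1 = p - (x1 * k1 + x2 * k2 + x3 * k3 + x4 * k4)"
  define w2 where "w2 = x2 * k1 - x1 * k2 + x4 * k3 - x3 * k4"
  define w3 where "w3 = x3 * k1 - x1 * k3 + x2 * k4 - x4 * k2"
  define w4 where "w4 = x4 * k1 - x1 * k4 + x3 * k2 - x2 * k3"
  have "x1 * (x1 - m * k1) + x2 * (x2 - m * k2) + x3 * (x3 - m * k3) + x4 * (x4 - m * k4) = m * w1"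
    unfolding w1_def using mp by (simp add: power2_eq_square algebra_simps)
  moreover have "x1 * (x2 - m * k2) - x2 * (x1 - m * k1) + x3 * (x4 - m * k4) - x4 * (x3 - m * k3) = m * w2"
    "x1 * (x3 - m * k3) - x3 * (x1 - m * k1) + x4 * (x2 - m * k2) - x2 * (x4 - m * k4) = m * w3"
    "x1 * (x4 - m * k4) - x4 * (x1 - m * k1) + x2 * (x3 - m * k3) - x3 * (x2 - m * k2) = m * w4"
    unfolding w2_def w3_def w4_def by (simp_all add: algebra_simps)
  ultimately have "(m * p) * (m * r) = (m * w1)\<^sup>2 + (m * w2)\<^sup>2 + (m * w3)\<^sup>2 + (m * w4)\<^sup>2"
    using euler_four_square_identity[of x1 x2 x3 x4 "x1 - m * k1" "x2 - m * k2" "x3 - m * k3" "x4 - m * k4"]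
    unfolding mp mr by simp
  hence "(m * m) * (r * p) = (m * m) * (w1\<^sup>2 + w2\<^sup>2 + w3\<^sup>2 + w4\<^sup>2)"
    by (simp add: power2_eq_square algebra_simps)
  hence "r * p = w1\<^sup>2 + w2\<^sup>2 + w3\<^sup>2 + w4\<^sup>2" using assms(1) by simp
  thus ?thesis unfolding sum_four_squares_def by blast
qed

lemma dvd_diff_of_half_multiple_residues:
  fixes m p r y1 y2 y3 y4 k1 k2 k3 k4 :: int
  assumes "m \<noteq> 0"
    and mp: "m * p = (y1 + m * k1)\<^sup>2 + (y2 + m * k2)\<^sup>2 + (y3 + m * k3)\<^sup>2 + (y4 + m * k4)\<^sup>2"
    and mr: "m * r = y1\<^sup>2 + y2\<^sup>2 + y3\<^sup>2 + y4\<^sup>2"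
    and "m dvd 2 * y1" "m dvd 2 * y2" "m dvd 2 * y3" "m dvd 2 * y4"
  shows "m dvd p - r"
proof -
  obtain s1 s2 s3 s4 where s: "2 * y1 = m * s1" "2 * y2 = m * s2" "2 * y3 = m * s3" "2 * y4 = m * s4"
    using assms(4-7) by (elim dvdE)
  have "m * p = m * r + m * (2 * y1 * k1 + 2 * y2 * k2 + 2 * y3 * k3 + 2 * y4 * k4)
      + m * m * (k1\<^sup>2 + k2\<^sup>2 + k3\<^sup>2 + k4\<^sup>2)"
    unfolding mp mr by (simp add: power2_eq_square algebra_simps)
  also have "\<dots> = m * (r + m * (s1 * k1 + s2 * k2 + s3 * k3 + s4 * k4 + k1\<^sup>2 + k2\<^sup>2 + k3\<^sup>2 + k4\<^sup>2))"
    unfolding s by (simp add: algebra_simps)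
  finally show ?thesis using assms(1) by simp
qed

lemma centered_residue_square_bound:
  fixes y m :: int
  shows "2 * \<bar>y\<bar> \<le> m \<Longrightarrow> 4 * y\<^sup>2 \<le> m\<^sup>2"
  using power_mono[of "2 * \<bar>y\<bar>" m 2] by (simp add: power_mult_distrib)

lemma dvd_double_of_extremal_centered_residues:
  fixes m y1 y2 y3 y4 :: int
  assumes "2 * \<bar>y1\<bar> \<le> m" "2 * \<bar>y2\<bar> \<le> m" "2 * \<bar>y3\<bar> \<le> m" "2 * \<bar>y4\<bar> \<le> m"
    and "y1\<^sup>2 + y2\<^sup>2 + y3\<^sup>2 + y4\<^sup>2 = m\<^sup>2"
  shows "m dvd 2 * y1" "m dvd 2 * y2" "m dvd 2 * y3" "m dvd 2 * y4"
proof -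
  have "4 * y1\<^sup>2 = m\<^sup>2" "4 * y2\<^sup>2 = m\<^sup>2" "4 * y3\<^sup>2 = m\<^sup>2" "4 * y4\<^sup>2 = m\<^sup>2"
    using assms(1-4)[THEN centered_residue_square_bound] assms(5) by linarith+
  moreover have "m dvd 2 * y" if "4 * y\<^sup>2 = m\<^sup>2" for y
    using that power2_eq_iff[of "2 * y" m] by (auto simp: power_mult_distrib)
  ultimately show "m dvd 2 * y1" "m dvd 2 * y2" "m dvd 2 * y3" "m dvd 2 * y4" by blast+
qed

lemma sum_four_squares_descent:
  fixes p m :: int
  assumes p: "prime p" and m: "1 < m" "m < p" and "sum_four_squares (m * p)"
  obtains r where "0 < r" "r < m" "sum_four_squares (r * p)"
proof -
  obtain x1 x2 x3 x4 where mp: "m * p = x1\<^sup>2 + x2\<^sup>2 + x3\<^sup>2 + x4\<^sup>2"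
    using assms(4) unfolding sum_four_squares_def by blast
  have m0: "m > 0" using m by simp
  obtain y1 k1 where 1: "x1 = y1 + m * k1" "2 * \<bar>y1\<bar> \<le> m" by (rule centered_residue[OF m0])
  obtain y2 k2 where 2: "x2 = y2 + m * k2" "2 * \<bar>y2\<bar> \<le> m" by (rule centered_residue[OF m0])
  obtain y3 k3 where 3: "x3 = y3 + m * k3" "2 * \<bar>y3\<bar> \<le> m" by (rule centered_residue[OF m0])
  obtain y4 k4 where 4: "x4 = y4 + m * k4" "2 * \<bar>y4\<bar> \<le> m" by (rule centered_residue[OF m0])
  define r where
    "r = p - 2 * (y1 * k1 + y2 * k2 + y3 * k3 + y4 * k4) - m * (k1\<^sup>2 + k2\<^sup>2 + k3\<^sup>2 + k4\<^sup>2)"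
  have mp': "m * p = (y1 + m * k1)\<^sup>2 + (y2 + m * k2)\<^sup>2 + (y3 + m * k3)\<^sup>2 + (y4 + m * k4)\<^sup>2"
    using mp 1 2 3 4 by simp
  have mr: "m * r = y1\<^sup>2 + y2\<^sup>2 + y3\<^sup>2 + y4\<^sup>2"
    unfolding r_def using mp' by (simp add: power2_eq_square algebra_simps)
  note centered = 1(2) 2(2) 3(2) 4(2)
  have "m * r \<le> m * m"
    using centered[THEN centered_residue_square_bound] unfolding mr power2_eq_square by linarith
  moreover have "0 \<le> m * r" unfolding mr by simp
  ultimately have r: "0 \<le> r" "r \<le> m" using m0 by (simp_all add: zero_le_mult_iff)
  have not_dvd: "\<not> m dvd p"
    using p m unfolding prime_int_iff by (auto dest!: spec[of _ m])
  note dvd_p_minus_r = dvd_diff_of_half_multiple_residues[OF _ mp' mr]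
  have "r \<noteq> 0"
  proof
    assume "r = 0"
    hence "y1 = 0 \<and> y2 = 0 \<and> y3 = 0 \<and> y4 = 0" using mr by (simp add: add_nonneg_eq_0_iff)
    thus False using dvd_p_minus_r \<open>r = 0\<close> not_dvd m0 by auto
  qed
  moreover have "r \<noteq> m"
  proof
    assume "r = m"
    hence "y1\<^sup>2 + y2\<^sup>2 + y3\<^sup>2 + y4\<^sup>2 = m\<^sup>2" using mr by (simp add: power2_eq_square)
    thus False using dvd_p_minus_r dvd_double_of_extremal_centered_residues[OF centered]
        \<open>r = m\<close> not_dvd m0 by (simp add: dvd_diff_left_iff)
  qed
  moreover have "m * r = (x1 - m * k1)\<^sup>2 + (x2 - m * k2)\<^sup>2 + (x3 - m * k3)\<^sup>2 + (x4 - m * k4)\<^sup>2"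
    using mr 1 2 3 4 by simp
  hence "sum_four_squares (r * p)" using four_squares_descent_identity[OF _ mp] m0 by simp
  ultimately show thesis using that[of r] r by simp
qed

lemma sum_four_squares_prime_of_multiple:
  fixes p m :: int
  assumes "prime p" "0 < m" "m < p" "sum_four_squares (m * p)"
  shows "sum_four_squares p"
  using assms(2-4)
proof (induction "nat m" arbitrary: m rule: less_induct)
  case less
  show ?case
  proof (cases "m = 1")
    case True
    thus ?thesis using less.prems by simp
  next
    case False
    hence "1 < m" using less.prems by simp
    then obtain r where "0 < r" "r < m" "sum_four_squares (r * p)"
      using sum_four_squares_descent[OF assms(1)] less.prems by blast
    thus ?thesis using less.hyps[of r] less.prems by simp
  qed
qed

lemma sum_four_squares_prime:
  fixes p :: int
  assumes "prime p"
  shows "sum_four_squares p"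
proof (cases "p = 2")
  case True
  thus ?thesis unfolding sum_four_squares_def by (intro exI[of _ 1] exI[of _ 0]) simp
next
  case False
  have p: "p > 1" using assms prime_gt_1_int by blast
  have "odd p" using False assms prime_odd_int p by simp
  then obtain x y where xy: "0 \<le> x" "0 \<le> y" "2 * x < p" "2 * y < p" "p dvd x\<^sup>2 + y\<^sup>2 + 1"
    using odd_prime_dvd_sum_two_squares_plus_one[OF assms] by blast
  then obtain m where m: "x\<^sup>2 + y\<^sup>2 + 1 = p * m" by (elim dvdE)
  have "(2 * x)\<^sup>2 < p\<^sup>2" "(2 * y)\<^sup>2 < p\<^sup>2"
    using xy by (intro power_strict_mono; simp)+
  hence "4 * (p * m) < 2 * p\<^sup>2 + 4"
    unfolding m[symmetric] by (simp add: power_mult_distrib)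
  moreover have "2 * p \<le> p\<^sup>2" using p by (simp add: power2_eq_square)
  ultimately have "p * m < p * p" using p unfolding power2_eq_square by linarith
  hence "m < p" using p by simp
  moreover have "0 < p * m" unfolding m[symmetric] by (simp add: add_nonneg_pos)
  hence "0 < m" using p by (simp add: zero_less_mult_iff)
  moreover have "sum_four_squares (m * p)" unfolding sum_four_squares_def using m
    by (intro exI[of _ x] exI[of _ y] exI[of _ 1] exI[of _ 0]) (simp add: algebra_simps)
  ultimately show ?thesis using sum_four_squares_prime_of_multiple[OF assms] by blast
qed

theorem sum_four_squares_nonneg:
  fixes n :: int
  assumes "n \<ge> 0"
  shows "sum_four_squares n"
  using assms
proof (induction n rule: prime_divisors_induct)
  case zero
  show ?case unfolding sum_four_squares_def by (intro exI[of _ 0]) simp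
next
  case (unit x)
  hence "x = 1" by auto
  thus ?case unfolding sum_four_squares_def by (intro exI[of _ 1] exI[of _ 0]) simp
next
  case (factor p x)
  have "p > 0" using factor.hyps prime_gt_0_int by blast
  hence "x \<ge> 0" using factor.prems by (simp add: zero_le_mult_iff)
  thus ?case using factor sum_four_squares_mult sum_four_squares_prime by blast
qed

lemma sum_four_squares_scaled_square:
  fixes y :: "'a :: comm_ring_1"
  assumes "c \<ge> 0"
  obtains a :: "nat \<Rightarrow> int" where "of_int c * y\<^sup>2 = (\<Sum>j<4. (of_int (a j) * y)\<^sup>2)"
proof -
  obtain a0 a1 a2 a3 where "c = a0\<^sup>2 + a1\<^sup>2 + a2\<^sup>2 + a3\<^sup>2"
    using sum_four_squares_nonneg[OF assms] unfolding sum_four_squares_def by blast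
  thus thesis
    by (intro that[of "\<lambda>j. [a0, a1, a2, a3] ! j"]) (simp add: numeral_eq_Suc power_mult_distrib algebra_simps)
qed

section \<open>Integer powers of a root of \<open>X\<^sup>2 - t X + 1\<close>\<close>

lemma quadratic_unit_inverse:
  fixes z :: "'a :: field"
  assumes "z * z = of_int t * z - 1"
  shows "inverse z = of_int t - z" "inverse z * inverse z = of_int t * inverse z - 1"
proof -
  have "z * (of_int t - z) = 1" using assms by (simp add: algebra_simps)
  thus inv: "inverse z = of_int t - z" by (rule inverse_unique)
  show "inverse z * inverse z = of_int t * inverse z - 1"
    unfolding inv using assms by (simp add: algebra_simps)
qed

text \<open>The coefficients do not depend on the root \<open>z\<close>; this is what lets a single
  representation serve both for \<open>\<epsilon>\<close> and for its conjugate \<open>\<epsilon>\<^sup>-\<^sup>1\<close>.\<close>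

lemma quadratic_unit_power_linear:
  "\<exists>u v :: int. \<forall>z :: 'a :: field. z * z = of_int t * z - 1 \<longrightarrow> z ^ n = of_int u + of_int v * z"
proof (induction n)
  case 0
  show ?case by (intro exI[of _ 1] exI[of _ 0]) simp
next
  case (Suc n)
  then obtain u v where uv: "\<And>z :: 'a. z * z = of_int t * z - 1 \<Longrightarrow> z ^ n = of_int u + of_int v * z"
    by blast
  have "z ^ Suc n = of_int (- v) + of_int (u + v * t) * z" if "z * z = of_int t * z - 1" for z :: 'a
  proof -
    have "z ^ Suc n = of_int u * z + of_int v * (z * z)" using uv[OF that] by (simp add: algebra_simps)
    thus ?thesis unfolding that by (simp add: algebra_simps)
  qed
  thus ?case by blast
qed

lemma quadratic_unit_power_int_linear:
  "\<exists>u v :: int. \<forall>z :: 'a :: field. z * z = of_int t * z - 1 \<longrightarrow> z powi j = of_int u + of_int v * z"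
proof (cases "j \<ge> 0")
  case True
  then obtain n where "j = int n" by (metis nonneg_eq_int)
  thus ?thesis using quadratic_unit_power_linear[of t n] by simp
next
  case False
  then obtain n where n: "j = - int n" by (metis nonneg_eq_int neg_0_le_iff_le linorder_le_cases minus_minus)
  obtain u v where uv: "\<And>z :: 'a. z * z = of_int t * z - 1 \<Longrightarrow> z ^ n = of_int u + of_int v * z"
    using quadratic_unit_power_linear[of t n] by blast
  have "z powi j = of_int (u + v * t) + of_int (- v) * z" if "z * z = of_int t * z - 1" for z :: 'a
  proof -
    have "z powi j = inverse z ^ n" unfolding n power_int_minus by (simp add: power_inverse)
    also have "\<dots> = of_int u + of_int v * (of_int t - z)"
      using uv[OF quadratic_unit_inverse(2)[OF that]] quadratic_unit_inverse(1)[OF that] by simp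
    finally show ?thesis by (simp add: algebra_simps)
  qed
  thus ?thesis by blast
qed

lemma quadratic_unit_Laurent_sum_linear:
  fixes c :: "nat \<Rightarrow> nat"
  shows "\<exists>a b :: int. \<forall>z :: 'a :: field. z * z = of_int t * z - 1 \<longrightarrow>
           (\<Sum>k<n. of_nat (c k) * z powi (i0 + int k)) = of_int a + of_int b * z"
proof (induction n)
  case 0
  show ?case by (intro exI[of _ 0]) simp
next
  case (Suc n)
  then obtain a b where ab: "\<And>z :: 'a. z * z = of_int t * z - 1 \<Longrightarrow>
      (\<Sum>k<n. of_nat (c k) * z powi (i0 + int k)) = of_int a + of_int b * z" by blast
  obtain u v where uv: "\<And>z :: 'a. z * z = of_int t * z - 1 \<Longrightarrow>
      z powi (i0 + int n) = of_int u + of_int v * z"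
    using quadratic_unit_power_int_linear[of t "i0 + int n"] by blast
  show ?case
    by (rule exI[of _ "a + int (c n) * u"], rule exI[of _ "b + int (c n) * v"]) (simp add: ab uv algebra_simps)
qed

lemma power_int_double:
  fixes z :: "'a :: field"
  assumes "z \<noteq> 0"
  shows "z powi (2 * m) = (z powi m)\<^sup>2" "z powi (2 * m + 1) = z * (z powi m)\<^sup>2"
  using assms by (simp_all add: power_int_mult mult.commute[of 2] power_int_add_1')

section \<open>Part (a): two consecutive powers\<close>

lemma nonneg_coeffs_of_ratio_bounds:
  fixes z a b :: real
  assumes "z > 1" "a + b / z \<le> a + b * z" "a + b * z \<le> z\<^sup>2 * (a + b / z)"
  shows "a \<ge> 0" "b \<ge> 0"
proof -
  have "z\<^sup>2 > 1" using assms(1) by (simp add: one_less_power)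
  hence "z - 1 / z > 0" "z\<^sup>2 - 1 > 0" using assms(1) by (simp_all add: field_simps power2_eq_square)
  moreover have "b * (z - 1 / z) \<ge> 0" using assms(2) by (simp add: algebra_simps)
  moreover have "z\<^sup>2 * (a + b / z) - (a + b * z) = a * (z\<^sup>2 - 1)"
    using assms(1) by (simp add: power2_eq_square field_simps)
  hence "a * (z\<^sup>2 - 1) \<ge> 0" using assms(3) by simp
  ultimately show "a \<ge> 0" "b \<ge> 0" by (simp_all add: zero_le_mult_iff)
qed

lemma even_power_int_bracket:
  fixes z r :: real
  assumes "z > 1" "r > 0"
  obtains i :: int where "z powi (2 * i) \<le> r" "r \<le> z powi (2 * i + 2)"
proof -
  define i where "i = \<lfloor>log (z\<^sup>2) r\<rfloor>"
  have pw: "z\<^sup>2 powr of_int k = z powi (2 * k)" for k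
    using assms(1) by (simp add: powr_real_of_int' power_int_mult)
  have "z\<^sup>2 > 1" using assms(1) by (simp add: one_less_power)
  hence "z\<^sup>2 powr of_int i \<le> r \<and> r < z\<^sup>2 powr of_int (i + 1)"
    using floor_log_eq_powr_iff[of r "z\<^sup>2" i] assms(2) unfolding i_def by blast
  hence "z powi (2 * i) \<le> r" "r < z powi (2 * (i + 1))" unfolding pw by auto
  thus thesis using that[of i] by (simp add: distrib_left)
qed

lemma Laurent_sum_shift:
  fixes w :: "'a :: field"
  assumes "w \<noteq> 0"
  shows "(\<Sum>k<n. of_nat (c k) * w powi (j - m + int k)) = w powi (- m) * (\<Sum>k<n. of_nat (c k) * w powi (j + int k))"
  unfolding sum_distrib_left
  by (intro sum.cong refl) (simp add: assms power_int_add[symmetric] algebra_simps)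

lemma conjugate_pair_two_consecutive_powers:
  fixes z e e' :: real
  assumes z: "z > 1" and pos: "e > 0" "e' > 0"
    and conj: "\<And>i. \<exists>a b :: int. z powi (- i) * e = of_int a + of_int b * z \<and> z powi i * e' = of_int a + of_int b / z"
  shows "\<exists>i c d :: int. c \<ge> 0 \<and> d \<ge> 0 \<and> e = of_int c * z powi i + of_int d * z powi (i + 1)"
proof -
  obtain i where i: "z powi (2 * i) \<le> e / e'" "e / e' \<le> z powi (2 * i + 2)"
    using even_power_int_bracket[OF z] pos by (metis divide_pos_pos)
  obtain a b :: int where X: "z powi (- i) * e = of_int a + of_int b * z" and Y: "z powi i * e' = of_int a + of_int b / z"
    using conj[of i] by blast
  define q where "q = z powi i"
  have q: "q > 0" "z powi (- i) = 1 / q" "z powi (2 * i) = q\<^sup>2" "z powi (2 * i + 2) = q\<^sup>2 * z\<^sup>2"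
    "z powi (i + 1) = q * z"
    unfolding q_def using z
    by (simp_all add: power_int_minus_divide power_int_mult power_int_add power_int_add_1 mult.commute[of 2])
  have "q * e' \<le> e / q" "e / q \<le> z\<^sup>2 * (q * e')"
    using i q pos by (simp_all add: pos_le_divide_eq pos_divide_le_eq power2_eq_square algebra_simps)
  hence "a \<ge> 0" "b \<ge> 0"
    using nonneg_coeffs_of_ratio_bounds[OF z, of a b] X Y unfolding q_def[symmetric] q(2) by simp_all
  moreover have "e = q * (of_int a + of_int b * z)" using X q(1,2) by (simp add: field_simps)
  hence "e = of_int a * z powi i + of_int b * z powi (i + 1)"
    unfolding q(5) by (simp add: q_def algebra_simps)
  ultimately show ?thesis by blast
qed

lemma semiring_E_two_consecutive_powers:
  fixes z :: real
  assumes z: "z > 1" "z * z = of_int t * z - 1" and "e \<in> semiring_E z"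
  shows "\<exists>i c d :: int. c \<ge> 0 \<and> d \<ge> 0 \<and> e = of_int c * z powi i + of_int d * z powi (i + 1)"
proof -
  obtain i0 n c where e: "e = (\<Sum>k<n. real (c k) * z powi (i0 + int k))"
    using assms(3) unfolding semiring_E_def by blast
  define S where "S w j = (\<Sum>k<n. real (c k) * w powi (j + int k))" for w j
  show ?thesis
  proof (cases "\<forall>k<n. c k = 0")
    case True
    hence "e = 0" unfolding e by simp
    thus ?thesis by (intro exI[of _ 0]) simp
  next
    case False
    then obtain k where k: "k < n" "c k > 0" by auto
    have S_pos: "S w j > 0" if "w > 0" for w j
      unfolding S_def using k that by (intro sum_pos2[of _ k]) auto
    have conj: "\<exists>a b :: int. z powi (- i) * e = of_int a + of_int b * z \<and>
        z powi i * S (inverse z) i0 = of_int a + of_int b / z" for i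
    proof -
      obtain a b where "\<And>w :: real. w * w = of_int t * w - 1 \<Longrightarrow> S w (i0 - i) = of_int a + of_int b * w"
        unfolding S_def using quadratic_unit_Laurent_sum_linear[of t c "i0 - i" n] by blast
      from this[OF z(2)] this[OF quadratic_unit_inverse(2)[OF z(2)]] show ?thesis
        using Laurent_sum_shift[of z c i0 i n] Laurent_sum_shift[of "inverse z" c i0 i n] z(1)
        unfolding S_def e
        by (intro exI[of _ a] exI[of _ b]) (auto simp: power_int_inverse power_int_minus divide_inverse)
    qed
    show ?thesis
      using conjugate_pair_two_consecutive_powers[OF z(1) _ _ conj] S_pos z(1) unfolding e S_def by simp
  qed
qed

section \<open>Denominators of algebraic integers\<close>

lemma monic_root_powers_span:
  fixes x :: "'a :: comm_ring_1" and P :: "'a poly"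
  assumes P: "poly P x = 0" "lead_coeff P = 1" "\<forall>i. coeff P i \<in> \<int>" and deg: "degree P = Suc m"
  shows "\<exists>c :: nat \<Rightarrow> int. x ^ k = (\<Sum>j<Suc m. of_int (c j) * x ^ j)"
proof (induction k)
  case 0
  show ?case
    by (rule exI[of _ "\<lambda>j. if j = 0 then 1 else 0"]) (simp add: sum.lessThan_Suc_shift del: sum.lessThan_Suc)
next
  case (Suc k)
  then obtain c where c: "x ^ k = (\<Sum>j<Suc m. of_int (c j) * x ^ j)" by blast
  have "\<forall>i. \<exists>z. coeff P i = of_int z" using P(3) by (auto elim!: Ints_cases)
  then obtain p where p: "\<And>i. coeff P i = of_int (p i)" by metis
  have "0 = (\<Sum>i\<le>Suc m. coeff P i * x ^ i)" using P(1) deg by (simp add: poly_altdef)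
  also have "\<dots> = (\<Sum>i<Suc m. coeff P i * x ^ i) + x ^ Suc m"
    using P(2) deg by (simp add: atMost_Suc lessThan_Suc_atMost[symmetric] del: sum.lessThan_Suc) (simp add: lessThan_Suc_atMost)
  finally have "(\<Sum>i<Suc m. of_int (p i) * x ^ i) + x ^ Suc m = 0"
    by (simp add: p del: sum.lessThan_Suc)
  hence top: "x ^ Suc m = - (\<Sum>i<Suc m. of_int (p i) * x ^ i)"
    by (simp only: eq_neg_iff_add_eq_0 add.commute)
  define c' where "c' j = (if j = 0 then 0 else c (j - 1)) - c m * p j" for j
  have "x ^ Suc k = (\<Sum>j<m. of_int (c j) * x ^ Suc j) + of_int (c m) * x ^ Suc m"
    using c by (simp add: sum_distrib_left algebra_simps)
  also have "\<dots> = (\<Sum>j<Suc m. of_int (if j = 0 then 0 else c (j - 1)) * x ^ j)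
      - of_int (c m) * (\<Sum>i<Suc m. of_int (p i) * x ^ i)"
    unfolding top by (simp add: sum.lessThan_Suc_shift del: sum.lessThan_Suc) (simp add: algebra_simps)
  also have "\<dots> = (\<Sum>j<Suc m. of_int (c' j) * x ^ j)"
    unfolding c'_def by (simp add: sum_distrib_left sum_subtractf algebra_simps)
  finally show ?case by blast
qed

lemma Rats_common_denominator:
  fixes A :: "'a :: field_char_0 set"
  assumes "finite A" "A \<subseteq> \<rat>"
  obtains L :: int where "L > 0" "\<forall>y\<in>A. of_int L * y \<in> \<int>"
  using assms
proof (induction A arbitrary: thesis rule: finite_induct)
  case empty
  show ?case by (rule empty.prems(1)[of 1]) simp_all
next
  case (insert y A)
  obtain L where L: "L > 0" "\<forall>y\<in>A. of_int L * y \<in> \<int>" using insert by blast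
  obtain a b where ab: "b > 0" "y = of_int a / of_int b" using insert.prems(2) by (auto elim: Rats_cases')
  have "of_int (L * b) * y = of_int (L * a)" using ab by simp
  moreover have "of_int (L * b) * z \<in> \<int>" if "z \<in> A" for z
    using L(2) that Ints_mult[OF Ints_of_int[of b]] by (fastforce simp: algebra_simps)
  ultimately show ?case using L ab by (intro insert.prems(1)[of "L * b"]) auto
qed

lemma Rats_Ints_of_bounded_denominators:
  fixes y :: "'a :: field_char_0"
  assumes "y \<in> \<rat>" "L \<noteq> 0" "\<And>k. of_int L * y ^ k \<in> \<int>"
  shows "y \<in> \<int>"
proof -
  obtain a b where ab: "b > 0" "coprime a b" "y = of_int a / of_int b"
    using assms(1) by (elim Rats_cases')
  define k where "k = nat \<bar>L\<bar>"
  obtain z where "of_int L * y ^ k = of_int z" using assms(3)[of k] by (elim Ints_cases)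
  moreover have "(of_int b :: 'a) ^ k \<noteq> 0" using ab(1) by simp
  ultimately have "of_int L * of_int a ^ k = of_int z * (of_int b :: 'a) ^ k"
    unfolding ab(3) power_divide times_divide_eq_right by (simp add: divide_eq_eq)
  hence "of_int (L * a ^ k) = (of_int (z * b ^ k) :: 'a)" by simp
  hence "L * a ^ k = z * b ^ k" by (simp only: of_int_eq_iff)
  hence "b ^ k dvd L * a ^ k" by simp
  moreover have "coprime (b ^ k) (a ^ k)" using ab(2) by (simp add: coprime_commute)
  ultimately have "b ^ k dvd L" using coprime_dvd_mult_left_iff by blast
  hence "\<bar>b ^ k\<bar> \<le> \<bar>L\<bar>" using dvd_imp_le_int[OF assms(2)] by blast
  hence bound: "b ^ k \<le> \<bar>L\<bar>" using ab(1) by simp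
  have "b = 1"
  proof (rule ccontr)
    assume "b \<noteq> 1"
    hence "2 ^ k \<le> b ^ k" using ab(1) by (intro power_mono) auto
    moreover have "int k < 2 ^ k" by (rule of_nat_less_two_power)
    ultimately show False using bound \<open>L \<noteq> 0\<close> unfolding k_def by linarith
  qed
  thus ?thesis using ab by simp
qed

section \<open>The real quadratic field and part (b)\<close>

lemma sqrt_squarefree_irrational:
  fixes D :: int
  assumes "D > 1" "squarefree D"
  shows "sqrt (of_int D) \<notin> \<rat>"
proof
  assume "sqrt (of_int D) \<in> \<rat>"
  moreover have "algebraic_int (sqrt (of_int D))" by (intro algebraic_int_sqrt) simp
  ultimately have "sqrt (of_int D) \<in> \<int>" using rational_algebraic_int_is_int by blast
  then obtain k where k: "sqrt (of_int D) = of_int k" by (elim Ints_cases)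
  have "real_of_int D = (sqrt (of_int D))\<^sup>2" using assms by simp
  hence "D = k\<^sup>2" unfolding k by (metis of_int_eq_iff of_int_power)
  hence "is_unit k" using assms(2) unfolding squarefree_def by (simp add: power2_eq_square)
  hence "k = 1 \<or> k = -1" by (auto simp: zdvd1_eq abs_if split: if_splits)
  thus False using \<open>D = k\<^sup>2\<close> assms(1) by auto
qed

locale real_quadratic_field =
  fixes D :: int
  assumes D_pos: "D > 0" and sqrt_irrational: "sqrt (of_int D) \<notin> \<rat>"
begin

abbreviation sqrtD :: real where "sqrtD \<equiv> sqrt (of_int D)"

lemma sqrtD_square: "sqrtD * sqrtD = of_int D"
  using D_pos by simp

lemma rational_coords_unique:
  assumes "a \<in> \<rat>" "b \<in> \<rat>" "c \<in> \<rat>" "d \<in> \<rat>" "a + b * sqrtD = c + d * sqrtD"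
  shows "a = c" "b = d"
proof -
  have "b = d"
  proof (rule ccontr)
    assume "b \<noteq> d"
    hence "sqrtD = (c - a) / (b - d)" using assms(5) by (simp add: field_simps)
    thus False using assms(1-4) sqrt_irrational by simp
  qed
  thus "a = c" "b = d" using assms(5) by simp_all
qed

lemma quad_field_iff: "x \<in> quad_field D \<longleftrightarrow> (\<exists>a\<in>\<rat>. \<exists>b\<in>\<rat>. x = a + b * sqrtD)"
  unfolding quad_field_def by (auto elim!: Rats_cases) (metis Rats_of_rat)

lemma qconj_eq:
  assumes "a \<in> \<rat>" "b \<in> \<rat>"
  shows "qconj D (a + b * sqrtD) = a - b * sqrtD"
  unfolding qconj_def
proof (rule the_equality)
  obtain p q where "a = of_rat p" "b = of_rat q" using assms by (auto elim!: Rats_cases)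
  thus "\<exists>p q. a + b * sqrtD = of_rat p + of_rat q * sqrtD \<and> a - b * sqrtD = of_rat p - of_rat q * sqrtD"
    by blast
next
  fix y assume "\<exists>p q. a + b * sqrtD = of_rat p + of_rat q * sqrtD \<and> y = of_rat p - of_rat q * sqrtD"
  thus "y = a - b * sqrtD" using rational_coords_unique[OF assms Rats_of_rat Rats_of_rat] by metis
qed

lemma quad_field_add:
  assumes "x \<in> quad_field D" "y \<in> quad_field D"
  shows "x + y \<in> quad_field D" "qconj D (x + y) = qconj D x + qconj D y"
proof -
  obtain a b c d where q: "a \<in> \<rat>" "b \<in> \<rat>" "c \<in> \<rat>" "d \<in> \<rat>"
    and xy: "x = a + b * sqrtD" "y = c + d * sqrtD"
    using assms unfolding quad_field_iff by blast
  have xy': "x + y = (a + c) + (b + d) * sqrtD"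
    unfolding xy by (simp add: algebra_simps)
  thus "x + y \<in> quad_field D" unfolding quad_field_iff using q by force
  have "qconj D (x + y) = (a + c) - (b + d) * sqrtD"
    unfolding xy' using q by (intro qconj_eq) auto
  moreover have "qconj D x = a - b * sqrtD" "qconj D y = c - d * sqrtD"
    unfolding xy using q by (simp_all add: qconj_eq)
  ultimately show "qconj D (x + y) = qconj D x + qconj D y" by (simp add: algebra_simps)
qed

lemma quad_field_mult:
  assumes "x \<in> quad_field D" "y \<in> quad_field D"
  shows "x * y \<in> quad_field D" "qconj D (x * y) = qconj D x * qconj D y"
proof -
  obtain a b c d where q: "a \<in> \<rat>" "b \<in> \<rat>" "c \<in> \<rat>" "d \<in> \<rat>"
    and xy: "x = a + b * sqrtD" "y = c + d * sqrtD"
    using assms unfolding quad_field_iff by blast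
  have "x * y = (a * c + b * d * (sqrtD * sqrtD)) + (a * d + b * c) * sqrtD"
    unfolding xy by (simp add: algebra_simps)
  hence xy': "x * y = (a * c + b * d * of_int D) + (a * d + b * c) * sqrtD"
    unfolding sqrtD_square .
  thus "x * y \<in> quad_field D" unfolding quad_field_iff using q by force
  have "qconj D (x * y) = (a * c + b * d * of_int D) - (a * d + b * c) * sqrtD"
    unfolding xy' using q by (intro qconj_eq) auto
  moreover have "qconj D x = a - b * sqrtD" "qconj D y = c - d * sqrtD"
    unfolding xy using q by (simp_all add: qconj_eq)
  moreover have "(a - b * sqrtD) * (c - d * sqrtD) = (a * c + b * d * (sqrtD * sqrtD)) - (a * d + b * c) * sqrtD"
    by (simp add: algebra_simps)
  ultimately show "qconj D (x * y) = qconj D x * qconj D y"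
    unfolding sqrtD_square by simp
qed

lemma quad_field_of_rat:
  assumes "r \<in> \<rat>"
  shows "r \<in> quad_field D" "qconj D r = r"
proof -
  show "r \<in> quad_field D"
    unfolding quad_field_iff using assms by (intro bexI[of _ r] bexI[of _ 0]) simp_all
  show "qconj D r = r" using qconj_eq[OF assms Rats_0] by simp
qed

lemma quad_field_power:
  assumes "x \<in> quad_field D"
  shows "x ^ k \<in> quad_field D" "qconj D (x ^ k) = qconj D x ^ k"
  by (induction k) (simp_all add: assms quad_field_mult quad_field_of_rat)

text \<open>The powers of \<open>x\<close> lie in the \<open>\<int>\<close>-span of \<open>1, x, \<dots>, x\<^sup>m\<close>, so one denominator
  serves for the coordinates of all of them.\<close>

lemma algebraic_int_powers_bounded_denominators:
  assumes x: "x \<in> quad_field D" "algebraic_int x"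
  obtains L :: int where "L > 0"
    "\<And>k. \<exists>U\<in>\<rat>. \<exists>V\<in>\<rat>. of_int L * U \<in> \<int> \<and> of_int L * V \<in> \<int> \<and> x ^ k = U + V * sqrtD"
proof -
  obtain P where P: "poly P x = 0" "lead_coeff P = 1" "\<forall>i. coeff P i \<in> \<int>"
    using x(2) by (auto elim: algebraic_int.cases)
  have "degree P \<noteq> 0"
  proof
    assume "degree P = 0"
    hence "poly P x = lead_coeff P" by (metis degree_0_id poly_const_conv)
    thus False using P by simp
  qed
  then obtain m where m: "degree P = Suc m" using not0_implies_Suc by blast
  have "\<forall>j. \<exists>a\<in>\<rat>. \<exists>b\<in>\<rat>. x ^ j = a + b * sqrtD"
    using quad_field_power(1)[OF x(1)] unfolding quad_field_iff by blast
  then obtain A B where AB: "\<And>j. A j \<in> \<rat>" "\<And>j. B j \<in> \<rat>" "\<And>j. x ^ j = A j + B j * sqrtD"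
    by metis
  obtain L where L: "L > 0" "\<forall>y \<in> A ` {..<Suc m} \<union> B ` {..<Suc m}. of_int L * y \<in> \<int>"
    using Rats_common_denominator[of "A ` {..<Suc m} \<union> B ` {..<Suc m}"] AB(1,2) by blast
  have "\<exists>U\<in>\<rat>. \<exists>V\<in>\<rat>. of_int L * U \<in> \<int> \<and> of_int L * V \<in> \<int> \<and> x ^ k = U + V * sqrtD" for k
  proof -
    obtain c where c: "x ^ k = (\<Sum>j<Suc m. of_int (c j) * x ^ j)"
      using monic_root_powers_span[OF P m] by blast
    define U where "U = (\<Sum>j<Suc m. of_int (c j) * A j)"
    define V where "V = (\<Sum>j<Suc m. of_int (c j) * B j)"
    have "U \<in> \<rat>" "V \<in> \<rat>"
      unfolding U_def V_def using AB(1,2) by (auto intro!: Rats_sum simp del: sum.lessThan_Suc)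
    moreover have "of_int L * U \<in> \<int>" "of_int L * V \<in> \<int>"
      unfolding U_def V_def sum_distrib_left using L(2)
      by (auto simp: mult.left_commute[of "of_int L"] simp del: sum.lessThan_Suc)
    moreover have "x ^ k = (\<Sum>j<Suc m. of_int (c j) * (A j + B j * sqrtD))"
      using c by (simp only: AB(3)[symmetric])
    hence "x ^ k = U + V * sqrtD" unfolding U_def V_def
      by (simp add: distrib_left sum.distrib sum_distrib_right mult.assoc del: sum.lessThan_Suc)
    ultimately show ?thesis by blast
  qed
  thus thesis using that L(1) by blast
qed

lemma algebraic_int_norm_Ints:
  assumes x: "x \<in> quad_field D" "algebraic_int x"
  shows "x * qconj D x \<in> \<int>"
proof -
  obtain L where L: "L > 0"
    "\<And>k. \<exists>U\<in>\<rat>. \<exists>V\<in>\<rat>. of_int L * U \<in> \<int> \<and> of_int L * V \<in> \<int> \<and> x ^ k = U + V * sqrtD"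
    using algebraic_int_powers_bounded_denominators[OF x] by blast
  define N where "N = x * qconj D x"
  obtain a b where ab: "a \<in> \<rat>" "b \<in> \<rat>" "x = a + b * sqrtD" using x(1) unfolding quad_field_iff by blast
  have "N = a * a - b * b * (sqrtD * sqrtD)" unfolding N_def ab(3) using ab(1,2) by (simp add: qconj_eq algebra_simps)
  hence N_rat: "N \<in> \<rat>" using ab(1,2) unfolding sqrtD_square by simp
  have "of_int (L * L) * N ^ k \<in> \<int>" for k
  proof -
    obtain U V where UV: "U \<in> \<rat>" "V \<in> \<rat>" "of_int L * U \<in> \<int>" "of_int L * V \<in> \<int>" "x ^ k = U + V * sqrtD"
      using L(2)[of k] by blast
    have "N ^ k = x ^ k * qconj D (x ^ k)"
      unfolding N_def quad_field_power(2)[OF x(1)] by (simp add: power_mult_distrib)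
    hence "N ^ k = U * U - V * V * (sqrtD * sqrtD)" using UV by (simp add: qconj_eq algebra_simps)
    hence "of_int (L * L) * N ^ k = (of_int L * U) * (of_int L * U) - (of_int L * V) * (of_int L * V) * of_int D"
      unfolding sqrtD_square by (simp only:) (simp add: algebra_simps)
    thus ?thesis using UV(3,4) by simp
  qed
  hence "N \<in> \<int>" using Rats_Ints_of_bounded_denominators[OF N_rat, of "L * L"] L(1) by simp
  thus ?thesis unfolding N_def .
qed

lemma algebraic_int_trace_Ints:
  assumes x: "x \<in> quad_field D" "algebraic_int x"
  shows "x + qconj D x \<in> \<int>"
proof -
  have "algebraic_int (x + 1)"
    by (rule algebraic_int_root[OF x(2), of "[:-1, 1:]"]) (auto simp: coeff_pCons split: nat.splits)
  moreover have one: "1 \<in> quad_field D" "qconj D 1 = 1" using quad_field_of_rat[OF Rats_1] by simp_all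
  ultimately have "(x + 1) * qconj D (x + 1) \<in> \<int>"
    using x(1) quad_field_add(1) by (intro algebraic_int_norm_Ints) auto
  moreover have "x + qconj D x = (x + 1) * qconj D (x + 1) - x * qconj D x - 1"
    using quad_field_add(2)[OF x(1) one(1)] one(2) by (simp add: algebra_simps)
  ultimately show ?thesis using algebraic_int_norm_Ints[OF x] by (simp add: Ints_diff)
qed

lemma tp_fund_unit_quadratic:
  assumes "tp_fund_unit D \<epsilon>"
  obtains t :: int where "\<epsilon> * \<epsilon> = of_int t * \<epsilon> - 1"
proof -
  have u: "\<epsilon> \<in> ring_of_integers D" "inverse \<epsilon> \<in> ring_of_integers D" "\<epsilon> > 1" "qconj D \<epsilon> > 0"
    using assms unfolding tp_fund_unit_def units_OK_def by auto
  hence K: "\<epsilon> \<in> quad_field D" "inverse \<epsilon> \<in> quad_field D"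
    and ai: "algebraic_int \<epsilon>" "algebraic_int (inverse \<epsilon>)"
    unfolding ring_of_integers_def by auto
  obtain n1 where n1: "\<epsilon> * qconj D \<epsilon> = of_int n1"
    using algebraic_int_norm_Ints[OF K(1) ai(1)] by (elim Ints_cases)
  obtain n2 where n2: "inverse \<epsilon> * qconj D (inverse \<epsilon>) = of_int n2"
    using algebraic_int_norm_Ints[OF K(2) ai(2)] by (elim Ints_cases)
  have "of_int (n1 * n2) = (\<epsilon> * inverse \<epsilon>) * qconj D (\<epsilon> * inverse \<epsilon>)"
    using quad_field_mult(2)[OF K] n1 n2 by (simp add: algebra_simps)
  also have "\<dots> = 1" using u(3) quad_field_of_rat[OF Rats_1] by simp
  finally have "n1 * n2 = 1" by (simp only: of_int_eq_1_iff)
  moreover have "n1 > 0" using n1 u(3,4) by (metis of_int_0_less_iff mult_pos_pos order.strict_trans zero_less_one)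
  ultimately have norm: "\<epsilon> * qconj D \<epsilon> = 1" using n1 pos_zmult_eq_1_iff by auto
  obtain t where "\<epsilon> + qconj D \<epsilon> = of_int t"
    using algebraic_int_trace_Ints[OF K(1) ai(1)] by (elim Ints_cases)
  hence "\<epsilon> * (\<epsilon> + qconj D \<epsilon>) = of_int t * \<epsilon>" by simp
  hence "\<epsilon> * \<epsilon> = of_int t * \<epsilon> - \<epsilon> * qconj D \<epsilon>" by (simp add: algebra_simps)
  thus thesis using that[of t] norm by simp
qed

lemma quadratic_unit_lattice_in_ring_of_integers:
  assumes \<epsilon>: "\<epsilon> \<in> quad_field D" "\<epsilon> * \<epsilon> = of_int t * \<epsilon> - 1"
  shows "of_int u + of_int v * \<epsilon> \<in> ring_of_integers D"
proof -
  define x where "x = of_int u + of_int v * \<epsilon>"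
  have "of_int u \<in> quad_field D" "of_int v \<in> quad_field D"
    by (simp_all add: quad_field_of_rat)
  hence "x \<in> quad_field D" unfolding x_def using quad_field_add(1) quad_field_mult(1)[OF _ \<epsilon>(1)] by blast
  moreover have "algebraic_int x"
  proof (rule algebraic_int.intros)
    let ?P = "[: of_int (u * u + u * v * t + v * v), - of_int (2 * u + v * t), 1 :] :: real poly"
    show "lead_coeff ?P = 1" by simp
    show "\<forall>i. coeff ?P i \<in> \<int>" by (auto simp: coeff_pCons split: nat.splits simp del: of_int_add of_int_mult)
    have "poly ?P x = of_int v * of_int v * (\<epsilon> * \<epsilon> - of_int t * \<epsilon> + 1)"
      unfolding x_def by (simp add: algebra_simps)
    thus "poly ?P x = 0" using \<epsilon>(2) by simp
  qed
  ultimately show ?thesis unfolding ring_of_integers_def x_def by blast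
qed

lemma power_int_in_ring_of_integers:
  assumes "\<epsilon> \<in> quad_field D" "\<epsilon> * \<epsilon> = of_int t * \<epsilon> - 1"
  shows "of_int w * \<epsilon> powi k \<in> ring_of_integers D"
proof -
  obtain u v where "\<epsilon> powi k = of_int u + of_int v * \<epsilon>"
    using quadratic_unit_power_int_linear[of t k] assms(2) by blast
  hence "of_int w * \<epsilon> powi k = of_int (w * u) + of_int (w * v) * \<epsilon>" by (simp add: algebra_simps)
  thus ?thesis using quadratic_unit_lattice_in_ring_of_integers[OF assms, of "w * u" "w * v"] by (simp only:)
qed

lemma form_represents_power_squares:
  assumes \<epsilon>: "\<epsilon> \<in> quad_field D" "\<epsilon> * \<epsilon> = of_int t * \<epsilon> - 1" and "c \<ge> 0" "d \<ge> 0"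
  shows "\<exists>x :: nat \<Rightarrow> real. (\<forall>j<8. x j \<in> ring_of_integers D) \<and>
    of_int c * (\<epsilon> powi k)\<^sup>2 + \<epsilon> * (of_int d * (\<epsilon> powi l)\<^sup>2) = (\<Sum>j<4. (x j)\<^sup>2) + \<epsilon> * (\<Sum>j\<in>{4..<8}. (x j)\<^sup>2)"
proof -
  obtain a :: "nat \<Rightarrow> int" where a: "of_int c * (\<epsilon> powi k)\<^sup>2 = (\<Sum>j<4. (of_int (a j) * \<epsilon> powi k)\<^sup>2)"
    by (rule sum_four_squares_scaled_square[OF \<open>c \<ge> 0\<close>])
  obtain b :: "nat \<Rightarrow> int" where b: "of_int d * (\<epsilon> powi l)\<^sup>2 = (\<Sum>j<4. (of_int (b j) * \<epsilon> powi l)\<^sup>2)"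
    by (rule sum_four_squares_scaled_square[OF \<open>d \<ge> 0\<close>])
  define x where "x j = (if j < 4 then of_int (a j) * \<epsilon> powi k else of_int (b (j - 4)) * \<epsilon> powi l)" for j
  have "x j \<in> ring_of_integers D" for j
    unfolding x_def using power_int_in_ring_of_integers[OF \<epsilon>] by simp
  moreover have "(\<Sum>j<4. (x j)\<^sup>2) = of_int c * (\<epsilon> powi k)\<^sup>2"
    unfolding a x_def by (intro sum.cong) auto
  moreover have "(\<Sum>j\<in>{4..<8}. (x j)\<^sup>2) = (\<Sum>j<4. (x (j + 4))\<^sup>2)"
    using sum.shift_bounds_nat_ivl[of "\<lambda>j. (x j)\<^sup>2" 0 4 4] by (simp add: lessThan_atLeast0)
  moreover have "\<dots> = of_int d * (\<epsilon> powi l)\<^sup>2"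
    unfolding b x_def by simp
  ultimately show ?thesis by (intro exI[of _ x]) simp
qed

lemma form_represents_two_consecutive_powers:
  assumes \<epsilon>: "\<epsilon> \<in> quad_field D" "\<epsilon> * \<epsilon> = of_int t * \<epsilon> - 1" and "c \<ge> 0" "d \<ge> 0"
  shows "\<exists>x :: nat \<Rightarrow> real. (\<forall>j<8. x j \<in> ring_of_integers D) \<and>
    of_int c * \<epsilon> powi i + of_int d * \<epsilon> powi (i + 1) = (\<Sum>j<4. (x j)\<^sup>2) + \<epsilon> * (\<Sum>j\<in>{4..<8}. (x j)\<^sup>2)"
proof -
  have "\<epsilon> \<noteq> 0" using \<epsilon>(2) by auto
  note double = power_int_double[OF this]
  show ?thesis
  proof (cases "even i")
    case True
    then obtain m where "i = 2 * m" by (elim evenE)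
    hence "of_int c * \<epsilon> powi i + of_int d * \<epsilon> powi (i + 1)
        = of_int c * (\<epsilon> powi m)\<^sup>2 + \<epsilon> * (of_int d * (\<epsilon> powi m)\<^sup>2)"
      using double by (simp add: algebra_simps)
    thus ?thesis using form_represents_power_squares[OF \<epsilon>(1,2) \<open>c \<ge> 0\<close> \<open>d \<ge> 0\<close>] by metis
  next
    case False
    then obtain m where "i = 2 * m + 1" by (elim oddE)
    moreover have "i + 1 = 2 * (m + 1)" using \<open>i = 2 * m + 1\<close> by simp
    ultimately have "\<epsilon> powi i = \<epsilon> * (\<epsilon> powi m)\<^sup>2" "\<epsilon> powi (i + 1) = (\<epsilon> powi (m + 1))\<^sup>2"
      using double[of m] double[of "m + 1"] by (simp_all only:)
    hence "of_int c * \<epsilon> powi i + of_int d * \<epsilon> powi (i + 1)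
        = of_int d * (\<epsilon> powi (m + 1))\<^sup>2 + \<epsilon> * (of_int c * (\<epsilon> powi m)\<^sup>2)"
      by (simp add: algebra_simps)
    thus ?thesis using form_represents_power_squares[OF \<epsilon>(1,2) \<open>d \<ge> 0\<close> \<open>c \<ge> 0\<close>] by metis
  qed
qed

end

theorem lemma9:
  fixes D :: int and \<epsilon> :: real
  assumes "D > 1" and "squarefree D" and "tp_fund_unit D \<epsilon>"
  shows "(\<forall>e \<in> semiring_E \<epsilon>. \<exists>i c d :: int. c \<ge> 0 \<and> d \<ge> 0 \<and>
            e = of_int c * \<epsilon> powi i + of_int d * \<epsilon> powi (i + 1))
       \<and> (\<forall>e \<in> semiring_E \<epsilon>. \<exists>x :: nat \<Rightarrow> real. (\<forall>j<8. x j \<in> ring_of_integers D) \<and>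
            e = (\<Sum>j<4. (x j)\<^sup>2) + \<epsilon> * (\<Sum>j\<in>{4..<8}. (x j)\<^sup>2))"
proof -
  interpret real_quadratic_field D
    using assms(1,2) sqrt_squarefree_irrational by unfold_locales simp_all
  obtain t where t: "\<epsilon> * \<epsilon> = of_int t * \<epsilon> - 1" using tp_fund_unit_quadratic[OF assms(3)] .
  have \<epsilon>: "\<epsilon> > 1" "\<epsilon> \<in> quad_field D"
    using assms(3) unfolding tp_fund_unit_def units_OK_def ring_of_integers_def by auto
  have part_a: "\<exists>i c d :: int. c \<ge> 0 \<and> d \<ge> 0 \<and> e = of_int c * \<epsilon> powi i + of_int d * \<epsilon> powi (i + 1)"
    if "e \<in> semiring_E \<epsilon>" for e
    using semiring_E_two_consecutive_powers[OF \<epsilon>(1) t that] .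
  moreover have "\<exists>x :: nat \<Rightarrow> real. (\<forall>j<8. x j \<in> ring_of_integers D) \<and>
      e = (\<Sum>j<4. (x j)\<^sup>2) + \<epsilon> * (\<Sum>j\<in>{4..<8}. (x j)\<^sup>2)" if "e \<in> semiring_E \<epsilon>" for e
    using part_a[OF that] form_represents_two_consecutive_powers[OF \<epsilon>(2) t] by blast
  ultimately show ?thesis by blast
qed

end
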